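(* Let $(X,\|\cdot\|)$ be a convex Banach space and let $\{v_n\}_{n\in\mathbb{N}}\subset X$ be a sequence such that $\|v_{n+m}\|\le\|v_n+v_m\|$ for all $n,m\in\mathbb{N}$ and $\lim_{n\to\infty}\frac{\|v_n\|}{n}>0$. Then the limit $\lim_{n\to\infty}\frac{v_n}{n}$ exists in $X$ if and only if $\left\{\frac{v_n}{\|v_n\|}\right\}_{n\in\mathbb{N}}$ is a uniformly convex subset of $X$.
   Context: $\mathbb{N}=\{1,2,3,\dots\}$. A Banach space $X$ is convex if for all $u,v\in X$ with $u\ne v$ and $\|u\|=\|v\|=1$ we have $\|u+v\|<2$. A subset $S\subset X$ is called uniformly convex if for every $\varepsilon>0$ there exists $\delta\in(0,1)$ such that for all $u,v\in S$ with $\|u\|=\|v\|=1$ and $\|u-v\|\ge\varepsilon$ we have $\|u+v\|\le 2-\delta$. (Under the hypotheses, the limit $\lim_{n\to\infty}\|v_n\|/n$ exists and equals $\inf_n \|v_n\|/n$ by the classical Fekete lemma, so all $v_n$ are non-zero.) *)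

theory Defs
  imports "HOL-Analysis.Analysis"
begin

text \<open>A (real) normed space is convex (strictly convex) if distinct unit vectors
  have a sum of norm strictly less than 2.\<close>
definition convex_space :: "'a::real_normed_vector itself \<Rightarrow> bool" where
  "convex_space _ \<longleftrightarrow>
     (\<forall>u v :: 'a. u \<noteq> v \<and> norm u = 1 \<and> norm v = 1 \<longrightarrow> norm (u + v) < 2)"

definition uniformly_convex_set :: "'a::real_normed_vector set \<Rightarrow> bool" where
  "uniformly_convex_set S \<longleftrightarrow>
     (\<forall>\<epsilon>>0. \<exists>\<delta>. 0 < \<delta> \<and> \<delta> < 1 \<and>
        (\<forall>u\<in>S. \<forall>v\<in>S. norm u = 1 \<and> norm v = 1 \<and> norm (u - v) \<ge> \<epsilon>
            \<longrightarrow> norm (u + v) \<le> 2 - \<delta>))"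

end

theory Submission
  imports Defs
begin

text \<open>By Fekete, \<open>norm (v n) \<ge> n L\<close>, so the
  excess \<open>norm (v n) - n L\<close> is nonnegative and \<open>o(n)\<close>. If the set of directions is uniformly
  convex, then every pair of indices \<open>s, n\<close> whose directions are \<open>\<epsilon>\<close>-apart costs a definite
  amount \<open>min s n \<cdot> L \<delta>\<close> of excess at \<open>s + n\<close>. Walking along an arithmetic progression
  with step \<open>N\<close> therefore soon reaches an index whose direction is close to that of \<open>v N\<close>,
  and from there one more comparison reaches any \<open>m \<ge> 2 N\<close>; so the directions form a
  Cauchy sequence and \<open>v n / n\<close> converges. Conversely, if \<open>v n / n \<rightarrow> w\<close> then the
  directions converge to \<open>sgn w\<close>, hence lie in a compact set, on which strict convexity is
  automatically uniform.\<close>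

lemma compact_insert_limit_range:
  fixes f :: "nat \<Rightarrow> 'a::topological_space"
  assumes "f \<longlonglongrightarrow> l"
  shows "compact (insert l (range f))"
  using compactin_sequence_with_limit[of euclidean f l "range f"] assms by simp

lemma uniformly_convex_set_subset:
  "uniformly_convex_set T \<Longrightarrow> S \<subseteq> T \<Longrightarrow> uniformly_convex_set S"
  unfolding uniformly_convex_set_def by (meson subsetD)

lemma uniformly_convex_set_compact:
  fixes K :: "'a::real_normed_vector set"
  assumes convex: "convex_space TYPE('a)" and "compact K"
  shows "uniformly_convex_set K"
  unfolding uniformly_convex_set_def
proof (intro allI impI)
  fix \<epsilon> :: real
  assume "\<epsilon> > 0"
  define P where
    "P = (K \<times> K) \<inter> {z. norm (fst z) = 1 \<and> norm (snd z) = 1 \<and> \<epsilon> \<le> norm (fst z - snd z)}"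
  have "compact P"
    unfolding P_def using compact_Times[OF \<open>compact K\<close> \<open>compact K\<close>]
    by (intro compact_Int_closed closed_Collect_conj closed_Collect_eq closed_Collect_le
        continuous_intros)
  obtain M where "M < 2" and M: "\<And>x y. (x, y) \<in> P \<Longrightarrow> norm (x + y) \<le> M"
  proof (cases "P = {}")
    case True
    then show ?thesis using that[of 0] by auto
  next
    case False
    have "continuous_on P (\<lambda>z. norm (fst z + snd z))"
      by (intro continuous_intros)
    then obtain z where "z \<in> P" and z: "\<And>z'. z' \<in> P \<Longrightarrow> norm (fst z' + snd z') \<le> norm (fst z + snd z)"
      using continuous_attains_sup[OF \<open>compact P\<close> False] by blast
    then have "fst z \<noteq> snd z" "norm (fst z) = 1" "norm (snd z) = 1"
      using \<open>\<epsilon> > 0\<close> unfolding P_def by auto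
    then have "norm (fst z + snd z) < 2"
      using convex unfolding convex_space_def by blast
    with z show ?thesis using that by force
  qed
  show "\<exists>\<delta>>0. \<delta> < 1 \<and> (\<forall>u\<in>K. \<forall>v\<in>K. norm u = 1 \<and> norm v = 1 \<and> \<epsilon> \<le> norm (u - v)
          \<longrightarrow> norm (u + v) \<le> 2 - \<delta>)"
    using \<open>M < 2\<close> M[unfolded P_def]
    by (intro exI[of _ "min (1/2) (2 - M)"]) fastforce
qed

lemma uniformly_convex_set_range_convergent:
  fixes f :: "nat \<Rightarrow> 'a::real_normed_vector"
  assumes "convex_space TYPE('a)" and "convergent f"
  shows "uniformly_convex_set (range f)"
proof -
  from \<open>convergent f\<close> obtain l where "f \<longlonglongrightarrow> l"
    unfolding convergent_def by blast
  then have "uniformly_convex_set (insert l (range f))"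
    using assms(1) compact_insert_limit_range uniformly_convex_set_compact by blast
  then show ?thesis
    by (rule uniformly_convex_set_subset) auto
qed

lemma subadditive_ratio_limit_le:
  fixes a :: "nat \<Rightarrow> real"
  assumes subadd: "\<And>n m. n \<ge> 1 \<Longrightarrow> m \<ge> 1 \<Longrightarrow> a (n + m) \<le> a n + a m"
    and lim: "(\<lambda>n. a n / real n) \<longlonglongrightarrow> L" and "j \<ge> 1"
  shows "L \<le> a j / real j"
proof -
  have multiple: "a (Suc k * j) \<le> real (Suc k) * a j" for k
  proof (induction k)
    case (Suc k)
    have "a (Suc (Suc k) * j) \<le> a (Suc k * j) + a j"
      using subadd[of "Suc k * j" j] \<open>j \<ge> 1\<close> by (simp add: add.commute)
    with Suc show ?case by (simp add: algebra_simps)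
  qed simp
  have "strict_mono (\<lambda>k. Suc k * j)"
    using \<open>j \<ge> 1\<close> by (auto simp: strict_mono_def)
  from LIMSEQ_subseq_LIMSEQ[OF lim this]
  have "(\<lambda>k. a (Suc k * j) / real (Suc k * j)) \<longlonglongrightarrow> L"
    by (simp add: o_def)
  moreover have "a (Suc k * j) / real (Suc k * j) \<le> a j / real j" for k
  proof -
    have "a (Suc k * j) / real (Suc k * j) \<le> (real (Suc k) * a j) / (real (Suc k) * real j)"
      unfolding of_nat_mult[symmetric] by (rule divide_right_mono[OF multiple]) simp
    also have "\<dots> = a j / real j"
      by (rule mult_divide_mult_cancel_left) simp
    finally show ?thesis .
  qed
  ultimately show ?thesis
    by (intro LIMSEQ_le_const2) auto
qed

lemma norm_add_le_sgn_defect: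
  fixes x y :: "'a::real_normed_vector"
  assumes "norm (sgn x + sgn y) \<le> 2 - \<delta>"
  shows "norm (x + y) \<le> norm x + norm y - min (norm x) (norm y) * \<delta>"
proof -
  have ordered: "norm (p + q) \<le> norm p + norm q - norm p * \<delta>"
    if le: "norm p \<le> norm q" and defect: "norm (sgn p + sgn q) \<le> 2 - \<delta>" and "p \<noteq> 0"
    for p q :: 'a
  proof -
    have "q \<noteq> 0" using le \<open>p \<noteq> 0\<close> by auto
    have "p + q = norm p *\<^sub>R (sgn p + sgn q) + (norm q - norm p) *\<^sub>R sgn q"
      using \<open>p \<noteq> 0\<close> \<open>q \<noteq> 0\<close> by (simp add: sgn_div_norm algebra_simps)
    then have "norm (p + q) \<le> norm p * norm (sgn p + sgn q) + (norm q - norm p) * norm (sgn q)"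
      using le by (metis abs_of_nonneg diff_ge_0_iff_ge norm_ge_zero norm_scaleR norm_triangle_ineq)
    also have "\<dots> \<le> norm p * (2 - \<delta>) + (norm q - norm p)"
      using defect \<open>q \<noteq> 0\<close> by (simp add: norm_sgn mult_left_mono)
    finally show ?thesis by (simp add: algebra_simps)
  qed
  show ?thesis
  proof (cases "x = 0 \<or> y = 0")
    case False
    then show ?thesis
      using ordered[of x y] ordered[of y x] assms
      by (cases "norm x \<le> norm y") (auto simp: add.commute)
  qed auto
qed

locale norm_subadditive_growth =
  fixes v :: "nat \<Rightarrow> 'a::real_normed_vector" and L :: real
  assumes norm_add_index: "\<And>n m. n \<ge> 1 \<Longrightarrow> m \<ge> 1 \<Longrightarrow> norm (v (n + m)) \<le> norm (v n + v m)"
    and growth_rate: "(\<lambda>n. norm (v n) / real n) \<longlonglongrightarrow> L"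
    and growth_pos: "L > 0"
begin

definition excess :: "nat \<Rightarrow> real" where
  "excess n = norm (v n) - real n * L"

lemma linear_le_norm:
  assumes "n \<ge> 1"
  shows "real n * L \<le> norm (v n)"
proof -
  have "norm (v (i + j)) \<le> norm (v i) + norm (v j)" if "i \<ge> 1" "j \<ge> 1" for i j
    using norm_add_index[OF that] norm_triangle_ineq order_trans by blast
  from subadditive_ratio_limit_le[OF this growth_rate assms]
  show ?thesis
    using assms by (simp add: field_simps)
qed

lemma excess_nonneg: "n \<ge> 1 \<Longrightarrow> 0 \<le> excess n"
  using linear_le_norm by (simp add: excess_def)

lemma v_nonzero:
  assumes "n \<ge> 1"
  shows "v n \<noteq> 0"
proof -
  have "0 < real n * L" using assms growth_pos by simp
  also have "\<dots> \<le> norm (v n)" using linear_le_norm assms .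
  finally show "v n \<noteq> 0" by auto
qed

lemma excess_eventually_le:
  assumes "\<theta> > 0"
  obtains N where "N \<ge> 1" and "\<And>n. n \<ge> N \<Longrightarrow> excess n \<le> real n * \<theta>"
proof -
  obtain N0 where N0: "\<And>n. n \<ge> N0 \<Longrightarrow> norm (v n) / real n < L + \<theta>"
    using order_tendstoD(2)[OF growth_rate, of "L + \<theta>"] assms
    by (auto simp: eventually_sequentially)
  show ?thesis
  proof (rule that[of "max N0 1"])
    fix n assume "n \<ge> max N0 1"
    then show "excess n \<le> real n * \<theta>"
      using N0[of n] by (simp add: excess_def field_simps)
  qed simp
qed

lemma excess_add_le:
  assumes "n \<ge> 1" "m \<ge> 1" "\<delta> \<ge> 0" and defect: "norm (sgn (v n) + sgn (v m)) \<le> 2 - \<delta>"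
  shows "excess (n + m) \<le> excess n + excess m - real (min n m) * L * \<delta>"
proof -
  have "real (min n m) * L \<le> min (norm (v n)) (norm (v m))"
  proof -
    have "real (min n m) * L \<le> real k * L" if "k \<in> {n, m}" for k
      using that growth_pos by (auto intro: mult_right_mono)
    then show ?thesis
      using linear_le_norm[of n] linear_le_norm[of m] assms(1,2) by fastforce
  qed
  then have "real (min n m) * L * \<delta> \<le> min (norm (v n)) (norm (v m)) * \<delta>"
    using \<open>\<delta> \<ge> 0\<close> by (rule mult_right_mono)
  then show ?thesis
    using norm_add_index[OF assms(1,2)] norm_add_le_sgn_defect[OF defect]
    by (simp add: excess_def algebra_simps)
qed

lemma excess_progression_le:
  assumes "1 \<le> N" "N \<le> b" "\<delta> \<ge> 0"
    and defect: "\<And>j. j < k \<Longrightarrow> norm (sgn (v (b + j * N)) + sgn (v N)) \<le> 2 - \<delta>"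
  shows "excess (b + k * N) \<le> excess b + real k * (excess N - real N * L * \<delta>)"
  using defect
proof (induction k)
  case (Suc k)
  have "excess (b + k * N + N) \<le> excess (b + k * N) + excess N - real N * L * \<delta>"
    using excess_add_le[of "b + k * N" N] Suc.prems[of k] assms(1-3) by (simp add: min.absorb2)
  with Suc show ?case by (simp add: algebra_simps)
qed simp

context
  fixes N :: nat and \<theta> \<delta> :: real
  assumes N_pos: "N \<ge> 1" and excess_le: "\<And>n. n \<ge> N \<Longrightarrow> excess n \<le> real n * \<theta>"
    and \<delta>_pos: "\<delta> > 0" and \<theta>_small: "4 * \<theta> < L * \<delta>"
begin

lemma \<theta>_nonneg: "0 \<le> \<theta>"
proof -
  have "0 \<le> real N * \<theta>"
    using excess_nonneg[OF N_pos] excess_le[of N] by simp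
  with N_pos show ?thesis by (simp add: zero_le_mult_iff)
qed

lemma sgn_near_if_comparable:
  assumes "N \<le> s" "s \<le> m" "m \<le> 2 * s"
  shows "2 - \<delta> < norm (sgn (v m) + sgn (v s))"
proof (rule ccontr)
  assume "\<not> ?thesis"
  then have "excess (m + s) \<le> excess m + excess s - real s * L * \<delta>"
    using excess_add_le[of m s \<delta>] assms N_pos \<delta>_pos by (simp add: min.absorb2)
  moreover have "excess m + excess s \<le> 3 * (real s * \<theta>)"
  proof -
    have "real m * \<theta> \<le> (2 * real s) * \<theta>"
      using assms \<theta>_nonneg by (intro mult_right_mono) simp_all
    then show ?thesis
      using excess_le[of m] excess_le[of s] assms by simp
  qed
  moreover have "real s * (3 * \<theta> - L * \<delta>) < 0"
    using assms N_pos \<theta>_small \<theta>_nonneg by (intro mult_pos_neg) simp_all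
  moreover have "0 \<le> excess (m + s)"
    using assms N_pos by (intro excess_nonneg) simp
  ultimately show False
    by (simp add: algebra_simps)
qed

lemma sgn_near_on_progression:
  assumes "N \<le> b" "b \<le> 3 * (k * N)" "k \<ge> 1"
  shows "\<exists>j<k. 2 - \<delta> < norm (sgn (v (b + j * N)) + sgn (v N))"
proof (rule ccontr)
  assume "\<not> ?thesis"
  then have "norm (sgn (v (b + j * N)) + sgn (v N)) \<le> 2 - \<delta>" if "j < k" for j
    using that by (simp add: not_less) (meson leD)
  from excess_progression_le[OF N_pos \<open>N \<le> b\<close> less_imp_le[OF \<delta>_pos] this]
  have "excess (b + k * N) \<le> excess b + real k * (excess N - real N * L * \<delta>)" .
  moreover have "excess b \<le> 3 * (real k * real N * \<theta>)"
  proof -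
    have "real b * \<theta> \<le> (3 * (real k * real N)) * \<theta>"
      using assms \<theta>_nonneg by (intro mult_right_mono) (simp_all flip: of_nat_mult)
    then show ?thesis
      using excess_le[of b] assms by simp
  qed
  moreover have "real k * excess N \<le> real k * (real N * \<theta>)"
    using excess_le[of N] by (intro mult_left_mono) simp_all
  moreover have "real k * real N * (4 * \<theta> - L * \<delta>) < 0"
    using assms N_pos \<theta>_small by (intro mult_pos_neg) simp_all
  moreover have "0 \<le> excess (b + k * N)"
    using assms N_pos by (intro excess_nonneg) simp
  ultimately show False
    by (simp add: algebra_simps)
qed

lemma sgn_near_chain:
  assumes "m \<ge> 2 * N"
  obtains s where "s \<ge> N" "2 - \<delta> < norm (sgn (v m) + sgn (v s))"
    "2 - \<delta> < norm (sgn (v s) + sgn (v N))"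
proof -
  define k where "k = m div (2 * N)"
  define b where "b = m - k * N"
  have "m = k * (2 * N) + m mod (2 * N)" "m mod (2 * N) < 2 * N"
    using N_pos unfolding k_def by (simp_all only: div_mult_mod_eq) simp
  then have lower: "2 * (k * N) \<le> m" and upper: "m < 2 * (k * N) + 2 * N"
    by linarith+
  then have "k \<ge> 1"
    using assms by (cases k) auto
  then have "N \<le> k * N" by simp
  with lower upper have "N \<le> b" "b \<le> 3 * (k * N)" "m = b + k * N" "m \<le> 2 * b"
    unfolding b_def by linarith+
  then obtain j where "j < k" and near_N: "2 - \<delta> < norm (sgn (v (b + j * N)) + sgn (v N))"
    using sgn_near_on_progression \<open>k \<ge> 1\<close> by blast
  have "j * N \<le> k * N" using \<open>j < k\<close> by simp
  with \<open>N \<le> b\<close> \<open>m = b + k * N\<close> \<open>m \<le> 2 * b\<close>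
  have "N \<le> b + j * N" "b + j * N \<le> m" "m \<le> 2 * (b + j * N)"
    by (linarith, linarith, simp add: algebra_simps)
  then show ?thesis
    using that sgn_near_if_comparable near_N by blast
qed

end

lemma Cauchy_sgn_if_uniformly_convex:
  assumes "uniformly_convex_set {sgn (v n) | n. n \<ge> 1}"
  shows "Cauchy (\<lambda>n. sgn (v n))"
proof (rule CauchyI)
  fix r :: real
  assume "r > 0"
  define S where "S = {sgn (v n) | n. n \<ge> 1}"
  have "r / 4 > 0" using \<open>r > 0\<close> by simp
  with assms obtain \<delta> where "\<delta> > 0" and uc: "\<forall>x\<in>S. \<forall>y\<in>S.
      norm x = 1 \<and> norm y = 1 \<and> r / 4 \<le> norm (x - y) \<longrightarrow> norm (x + y) \<le> 2 - \<delta>"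
    unfolding uniformly_convex_set_def S_def by blast
  have close: "norm (sgn (v m) - sgn (v n)) < r / 4"
    if "m \<ge> 1" "n \<ge> 1" and near: "2 - \<delta> < norm (sgn (v m) + sgn (v n))" for m n
  proof (rule ccontr)
    assume "\<not> ?thesis"
    moreover have "sgn (v m) \<in> S" "sgn (v n) \<in> S"
      using that unfolding S_def by blast+
    moreover have "norm (sgn (v m)) = 1" "norm (sgn (v n)) = 1"
      using v_nonzero that by (simp_all add: norm_sgn)
    ultimately have "norm (sgn (v m) + sgn (v n)) \<le> 2 - \<delta>"
      using uc by (simp add: not_less)
    with near show False by simp
  qed
  obtain N where "N \<ge> 1" and excess_le: "\<And>n. n \<ge> N \<Longrightarrow> excess n \<le> real n * (L * \<delta> / 5)"
    using excess_eventually_le[of "L * \<delta> / 5"] growth_pos \<open>\<delta> > 0\<close> by auto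
  have "4 * (L * \<delta> / 5) < L * \<delta>"
    using growth_pos \<open>\<delta> > 0\<close> by simp
  have near_N: "norm (sgn (v m) - sgn (v N)) < r / 2" if m: "m \<ge> 2 * N" for m
  proof -
    obtain s where "s \<ge> N" "2 - \<delta> < norm (sgn (v m) + sgn (v s))"
      "2 - \<delta> < norm (sgn (v s) + sgn (v N))"
      using sgn_near_chain[OF \<open>N \<ge> 1\<close> excess_le \<open>\<delta> > 0\<close> \<open>4 * (L * \<delta> / 5) < L * \<delta>\<close> m] .
    then have "norm (sgn (v m) - sgn (v s)) < r / 4" "norm (sgn (v s) - sgn (v N)) < r / 4"
      using close \<open>N \<ge> 1\<close> m by auto
    then show ?thesis
      using norm_diff_triangle_less[of "sgn (v m)" "sgn (v s)" "r / 4" "sgn (v N)" "r / 4"] by simp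
  qed
  show "\<exists>M. \<forall>m\<ge>M. \<forall>n\<ge>M. norm (sgn (v m) - sgn (v n)) < r"
  proof (intro exI allI impI)
    fix m n assume "m \<ge> 2 * N" "n \<ge> 2 * N"
    then show "norm (sgn (v m) - sgn (v n)) < r"
      using near_N[of m] near_N[of n]
        norm_diff_triangle_less[of "sgn (v m)" "sgn (v N)" "r / 2" "sgn (v n)" "r / 2"]
      by (simp add: norm_minus_commute)
  qed
qed

lemma convergent_div_iff_convergent_sgn:
  "convergent (\<lambda>n. v n /\<^sub>R real n) \<longleftrightarrow> convergent (\<lambda>n. sgn (v n))"
proof
  assume "convergent (\<lambda>n. v n /\<^sub>R real n)"
  then obtain w where w: "(\<lambda>n. v n /\<^sub>R real n) \<longlonglongrightarrow> w"
    unfolding convergent_def by blast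
  then have "(\<lambda>n. norm (v n) / real n) \<longlonglongrightarrow> norm w"
    using tendsto_norm[OF w] by (simp add: divide_inverse mult.commute)
  then have "w \<noteq> 0"
    using LIMSEQ_unique[OF growth_rate] growth_pos by force
  have "(\<lambda>n. sgn (v n /\<^sub>R real n)) \<longlonglongrightarrow> sgn w"
    using tendsto_sgn[OF w \<open>w \<noteq> 0\<close>] .
  moreover have "\<forall>\<^sub>F n in sequentially. sgn (v n /\<^sub>R real n) = sgn (v n)"
    unfolding eventually_sequentially by (intro exI[of _ 1]) (simp add: sgn_scaleR)
  ultimately have "(\<lambda>n. sgn (v n)) \<longlonglongrightarrow> sgn w"
    by (rule Lim_transform_eventually)
  then show "convergent (\<lambda>n. sgn (v n))"
    unfolding convergent_def by blast
next
  assume "convergent (\<lambda>n. sgn (v n))"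
  then obtain e where "(\<lambda>n. sgn (v n)) \<longlonglongrightarrow> e"
    unfolding convergent_def by blast
  then have "(\<lambda>n. (norm (v n) / real n) *\<^sub>R sgn (v n)) \<longlonglongrightarrow> L *\<^sub>R e"
    by (intro tendsto_scaleR growth_rate)
  moreover have "(norm (v n) / real n) *\<^sub>R sgn (v n) = v n /\<^sub>R real n" for n
    by (cases "v n = 0") (simp_all add: sgn_div_norm divide_inverse)
  ultimately show "convergent (\<lambda>n. v n /\<^sub>R real n)"
    unfolding convergent_def by auto
qed

end

theorem mainTheorem9:
  fixes v :: "nat \<Rightarrow> 'a::banach"
  assumes "convex_space TYPE('a)"
    and "\<And>n m. n \<ge> 1 \<Longrightarrow> m \<ge> 1 \<Longrightarrow> norm (v (n + m)) \<le> norm (v n + v m)"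
    and "\<exists>L>0. (\<lambda>n. norm (v n) / real n) \<longlonglongrightarrow> L"
  shows "(\<exists>w. (\<lambda>n. v n /\<^sub>R real n) \<longlonglongrightarrow> w) \<longleftrightarrow>
         uniformly_convex_set {v n /\<^sub>R norm (v n) | n. n \<ge> 1}"
proof -
  obtain L where "L > 0" and "(\<lambda>n. norm (v n) / real n) \<longlonglongrightarrow> L"
    using assms(3) by blast
  with assms(2) interpret norm_subadditive_growth v L
    by unfold_locales
  have "(\<exists>w. (\<lambda>n. v n /\<^sub>R real n) \<longlonglongrightarrow> w) \<longleftrightarrow> convergent (\<lambda>n. sgn (v n))"
    using convergent_div_iff_convergent_sgn by (simp add: convergent_def)
  also have "\<dots> \<longleftrightarrow> uniformly_convex_set {sgn (v n) | n. n \<ge> 1}"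
  proof
    assume "convergent (\<lambda>n. sgn (v n))"
    then have "uniformly_convex_set (range (\<lambda>n. sgn (v n)))"
      by (rule uniformly_convex_set_range_convergent[OF assms(1)])
    then show "uniformly_convex_set {sgn (v n) | n. n \<ge> 1}"
      by (rule uniformly_convex_set_subset) blast
  next
    assume "uniformly_convex_set {sgn (v n) | n. n \<ge> 1}"
    then show "convergent (\<lambda>n. sgn (v n))"
      using Cauchy_sgn_if_uniformly_convex Cauchy_convergent_iff by blast
  qed
  finally show ?thesis
    by (simp only: sgn_div_norm)
qed

end
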